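(* For each $g \geq 2$ there exists $A \in \mathrm{Sp}(2g,\mathbb{Z})$ whose leading eigenvalue is bi-Perron but none of whose eigenvalues is simple. Moreover, there are infinitely many such matrices $A$.
   Context: $\mathrm{Sp}(2g,\mathbb{Z}) = \{A \in \mathrm{GL}(2g,\mathbb{Z}) : A^t J A = J\}$, where $J$ is the $2g\times 2g$ matrix with $J_{ij} = \delta_{i(j-1)} - \delta_{(i-1)j}$. The leading eigenvalue of a matrix is its eigenvalue of largest modulus. An algebraic integer $\lambda > 1$ is bi-Perron if all its Galois conjugates lie in the annulus $\{z \in \mathbb{C} : 1/\lambda \le |z| \le \lambda\}$. An eigenvalue is simple if it is a simple root of the characteristic polynomial. *)

theory Defs
  imports "Jordan_Normal_Form.Char_Poly" "Jordan_Normal_Form.Determinant"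
begin

text \<open>The standard symplectic form J (2g x 2g), J_{ij} = delta_{i(j-1)} - delta_{(i-1)j}
  (indices shifted to 0-based, which does not change the matrix).\<close>
definition symp_J :: "nat \<Rightarrow> int mat" where
  "symp_J g = mat (2*g) (2*g) (\<lambda>(i,j). if j = i + 1 then 1 else if i = j + 1 then -1 else 0)"

definition Sp :: "nat \<Rightarrow> int mat set" where
  "Sp g = {A. A \<in> carrier_mat (2*g) (2*g) \<and> det A \<in> {1, -1} \<and>
              transpose_mat A * symp_J g * A = symp_J g}"

definition cpoly :: "int mat \<Rightarrow> complex poly" where
  "cpoly A = char_poly (map_mat of_int A)"

definition eigenvalues :: "int mat \<Rightarrow> complex set" where
  "eigenvalues A = {z. poly (cpoly A) z = 0}"

definition simple_eigenvalue :: "int mat \<Rightarrow> complex \<Rightarrow> bool" where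
  "simple_eigenvalue A z \<longleftrightarrow> z \<in> eigenvalues A \<and> order z (cpoly A) = 1"

definition leading_eigenvalue :: "int mat \<Rightarrow> complex \<Rightarrow> bool" where
  "leading_eigenvalue A z \<longleftrightarrow> z \<in> eigenvalues A \<and> (\<forall>w \<in> eigenvalues A. cmod w \<le> cmod z)"

definition algebraic_integer :: "complex \<Rightarrow> bool" where
  "algebraic_integer x \<longleftrightarrow> (\<exists>p :: int poly. lead_coeff p = 1 \<and> poly (map_poly of_int p) x = 0)"

text \<open>Galois conjugates of x: the complex roots of the minimal polynomial of x over Q,
  i.e. of any irreducible rational polynomial vanishing at x.\<close>
definition galois_conjugates :: "complex \<Rightarrow> complex set" where
  "galois_conjugates x = {z. \<exists>p :: rat poly. irreducible p \<and>
        poly (map_poly of_rat p) x = 0 \<and> poly (map_poly of_rat p) z = 0}"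

definition bi_Perron :: "complex \<Rightarrow> bool" where
  "bi_Perron x \<longleftrightarrow> x \<in> \<real> \<and> Re x > 1 \<and> algebraic_integer x \<and>
     (\<forall>z \<in> galois_conjugates x. 1 / Re x \<le> cmod z \<and> cmod z \<le> Re x)"

end

theory Submission
  imports Defs "HOL-Computational_Algebra.Polynomial_Factorial"
    "HOL-Computational_Algebra.Field_as_Ring"
begin

text \<open>For n \<ge> 3 the integer matrix M = [[n,-1],[1,0]] has determinant 1 and
  characteristic polynomial x^2 - n x + 1, whose roots are the quadratic unit
  \<lambda> = (n + sqrt (n^2 - 4)) / 2 > 1 and 1/\<lambda>. These are the only Galois conjugates
  of \<lambda>, so \<lambda> is bi-Perron. The block matrix [[M,N],[0,M]] with N = [[0,-1],[-1,0]]
  preserves the form J on Z^4; it is extended to Z^2g by the identity, with one extra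
  column in the upper right block compensating for the entries of J that couple
  coordinate 3 with coordinate 4. The characteristic polynomial of the result is the
  square ((x^2 - n x + 1) (x - 1)^(g-2))^2, so no eigenvalue is simple, and the leading
  eigenvalue is \<lambda>. The upper left entry n tells the matrices apart.\<close>

lemma det_mat_2:
  assumes A: "A \<in> carrier_mat 2 2"
  shows "det A = A $$ (0,0) * A $$ (1,1) - A $$ (0,1) * A $$ (1,0)"
proof -
  have "det A = (\<Sum>j<2. A $$ (0,j) * cofactor A 0 j)"
    by (rule laplace_expansion_row[OF A]) simp
  also have "\<dots> = A $$ (0,0) * cofactor A 0 0 + A $$ (0,1) * cofactor A 0 1"
    by (simp add: numeral_2_eq_2)
  also have "cofactor A 0 0 = A $$ (1,1)"
    using A by (simp add: cofactor_def det_single mat_delete_def)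
  also have "cofactor A 0 1 = - A $$ (1,0)"
    using A by (simp add: cofactor_def det_single mat_delete_def)
  finally show ?thesis by simp
qed

lemma char_poly_four_block_mat_lower_left_zero:
  fixes A :: "'a::idom mat"
  assumes A: "A \<in> carrier_mat n n" and B: "B \<in> carrier_mat n m" and D: "D \<in> carrier_mat m m"
  shows "char_poly (four_block_mat A B (0\<^sub>m m n) D) = char_poly A * char_poly D"
proof -
  let ?cm = "\<lambda>M. [:0, 1:] \<cdot>\<^sub>m 1\<^sub>m (dim_row M) + map_mat (\<lambda>a. [:- a:]) M"
  have "?cm (four_block_mat A B (0\<^sub>m m n) D)
      = four_block_mat (?cm A) (map_mat (\<lambda>a. [:- a:]) B) (0\<^sub>m m n) (?cm D)"
    by (rule eq_matI) (use A B D in \<open>auto simp: one_poly_def\<close>)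
  also have "det \<dots> = det (?cm A) * det (?cm D)"
    by (rule det_four_block_mat_lower_left_zero[OF _ _ refl]) (use A B D in auto)
  finally show ?thesis
    unfolding char_poly_defs using A D by simp
qed

lemma char_poly_one_mat: "char_poly (1\<^sub>m n :: 'a::comm_ring_1 mat) = [:-1, 1:] ^ n"
proof -
  have "char_poly (1\<^sub>m n :: 'a mat) = (\<Prod>a\<leftarrow>diag_mat (1\<^sub>m n). [:- a, 1:])"
    by (rule char_poly_upper_triangular[of _ n]) auto
  also have "diag_mat (1\<^sub>m n :: 'a mat) = replicate n 1"
    by (rule nth_equalityI) (auto simp: diag_mat_def)
  finally show ?thesis by (simp add: prod_list_replicate)
qed

lemma four_block_upper_unipotent_congruence:
  fixes A :: "'a::comm_ring_1 mat"
  assumes A: "A \<in> carrier_mat n n" and B: "B \<in> carrier_mat n m"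
    and J1: "J1 \<in> carrier_mat n n" and E: "E \<in> carrier_mat n m"
    and F: "F \<in> carrier_mat m n" and J2: "J2 \<in> carrier_mat m m"
  shows "transpose_mat (four_block_mat A B (0\<^sub>m m n) (1\<^sub>m m)) * four_block_mat J1 E F J2
           * four_block_mat A B (0\<^sub>m m n) (1\<^sub>m m)
       = four_block_mat (transpose_mat A * J1 * A) (transpose_mat A * (J1 * B + E))
           ((transpose_mat B * J1 + F) * A)
           ((transpose_mat B * J1 + F) * B + transpose_mat B * E + J2)"
proof -
  have "transpose_mat (four_block_mat A B (0\<^sub>m m n) (1\<^sub>m m))
      = four_block_mat (transpose_mat A) (0\<^sub>m n m) (transpose_mat B) (1\<^sub>m m)"
    using A B by (subst transpose_four_block_mat) auto
  moreover have "transpose_mat A * (J1 * B) + transpose_mat A * E = transpose_mat A * (J1 * B + E)"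
    using A B J1 E by (subst mult_add_distrib_mat[of _ n n]) auto
  moreover have "(transpose_mat B * J1 + F) * B + (transpose_mat B * E + J2)
      = (transpose_mat B * J1 + F) * B + transpose_mat B * E + J2"
    using B J1 E F J2 by (subst assoc_add_mat[of _ m m]) auto
  moreover have "(transpose_mat B * J1 + F) * A + 0\<^sub>m m n = (transpose_mat B * J1 + F) * A"
    using A B J1 F by (intro right_add_zero_mat) auto
  ultimately show ?thesis
    using A B J1 E F J2
    by (simp add: mult_four_block_mat[of _ n n _ m _ m] assoc_mult_mat[of _ n n _ n _ n])
qed

lemma not_simple_eigenvalue_if_cpoly_square:
  assumes "p \<noteq> 0" and "cpoly A = p ^ 2"
  shows "\<not> simple_eigenvalue A z"
proof -
  have "order z (cpoly A) = 2 * order z p"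
    unfolding assms(2) power2_eq_square using assms(1) by (simp add: order_mult)
  then show ?thesis unfolding simple_eigenvalue_def by simp
qed

lemma irreducible_dvd_if_common_root:
  fixes p q :: "rat poly" and x :: "'a::field_char_0"
  assumes "irreducible p"
    and "poly (map_poly of_rat p) x = 0" and "poly (map_poly of_rat q) x = 0"
  shows "p dvd q"
proof (rule ccontr)
  interpret of_rat_poly: map_poly_comm_ring_hom "of_rat :: rat \<Rightarrow> 'a" by unfold_locales
  assume "\<not> p dvd q"
  with assms(1) have "gcd p q = 1"
    by (simp add: irreducible_imp_prime_elem prime_elem_imp_coprime coprime_imp_gcd_eq_1)
  then have "fst (bezout_coefficients p q) * p + snd (bezout_coefficients p q) * q = 1"
    by (metis bezout_coefficients_fst_snd)
  then have "poly (map_poly of_rat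
      (fst (bezout_coefficients p q) * p + snd (bezout_coefficients p q) * q)) x = 1"
    by simp
  with assms(2,3) show False
    by (simp add: of_rat_poly.hom_add of_rat_poly.hom_mult)
qed

lemma galois_conjugate_root:
  fixes q :: "rat poly"
  assumes "poly (map_poly of_rat q) x = 0" and "z \<in> galois_conjugates x"
  shows "poly (map_poly of_rat q) z = 0"
proof -
  obtain p :: "rat poly" where p: "irreducible p" "poly (map_poly of_rat p) x = 0"
      "poly (map_poly of_rat p) z = (0::complex)"
    using assms(2) unfolding galois_conjugates_def by blast
  interpret of_rat_poly: map_poly_comm_ring_hom "of_rat :: rat \<Rightarrow> complex" by unfold_locales
  from irreducible_dvd_if_common_root[OF p(1,2) assms(1)] obtain r where "q = p * r" ..
  then show ?thesis using p(3) by (simp add: of_rat_poly.hom_mult)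
qed

definition recip_quadratic :: "nat \<Rightarrow> 'a::comm_ring_1 poly" where
  "recip_quadratic n = [:1, - of_nat n, 1:]"

lemma recip_quadratic_nonzero: "recip_quadratic n \<noteq> (0 :: 'a::comm_ring_1 poly)"
  by (simp add: recip_quadratic_def)

definition perron_root :: "nat \<Rightarrow> real" where
  "perron_root n = (real n + sqrt (real n ^ 2 - 4)) / 2"

lemma perron_root_add_inverse:
  assumes "n \<ge> 2"
  shows "perron_root n > 0" and "perron_root n + 1 / perron_root n = real n"
proof -
  define s where "s = sqrt (real n ^ 2 - 4)"
  have "real n ^ 2 \<ge> 2 ^ 2"
    using assms by (intro power_mono) auto
  then have s: "s \<ge> 0" "s ^ 2 = real n ^ 2 - 4"
    unfolding s_def by simp_all
  have root: "perron_root n = (real n + s) / 2"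
    unfolding perron_root_def s_def ..
  then show pos: "perron_root n > 0"
    using assms s(1) by simp
  have "perron_root n * ((real n - s) / 2) = (real n ^ 2 - s ^ 2) / 4"
    unfolding root by (simp add: power2_eq_square algebra_simps)
  then have "inverse (perron_root n) = (real n - s) / 2"
    using s(2) by (intro inverse_unique) simp
  then have inv: "1 / perron_root n = (real n - s) / 2"
    by (simp add: inverse_eq_divide)
  show "perron_root n + 1 / perron_root n = real n"
    unfolding inv by (simp add: root field_simps)
qed

lemma perron_root_gt_1:
  assumes "n \<ge> 3"
  shows "perron_root n > 1"
proof -
  have "real n ^ 2 \<ge> 2 ^ 2"
    using assms by (intro power_mono) auto
  then have "sqrt (real n ^ 2 - 4) \<ge> 0"
    by simp
  moreover have "real n \<ge> 3"
    using assms by simp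
  ultimately have "real n + sqrt (real n ^ 2 - 4) > 2"
    by linarith
  then show ?thesis
    unfolding perron_root_def by simp
qed

lemma recip_quadratic_roots:
  fixes z :: complex
  assumes "n \<ge> 2"
  shows "poly (recip_quadratic n) z = 0 \<longleftrightarrow>
           z = of_real (perron_root n) \<or> z = of_real (1 / perron_root n)"
proof -
  let ?l = "complex_of_real (perron_root n)" and ?m = "complex_of_real (1 / perron_root n)"
  have "?l * ?m = of_real (perron_root n * (1 / perron_root n))"
    by (simp only: of_real_mult)
  then have prod: "?l * ?m = 1"
    using perron_root_add_inverse(1)[OF assms] by simp
  have "?l + ?m = of_real (perron_root n + 1 / perron_root n)"
    by (simp only: of_real_add)
  then have sum: "?l + ?m = of_nat n"
    using perron_root_add_inverse(2)[OF assms] by simp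
  have factor: "recip_quadratic n = [:- ?l, 1:] * [:- ?m, 1:]"
    unfolding recip_quadratic_def using prod sum by (simp add: algebra_simps)
  show ?thesis
    unfolding factor poly_mult mult_eq_0_iff by simp
qed

lemma bi_Perron_perron_root:
  assumes "n \<ge> 3"
  shows "bi_Perron (of_real (perron_root n))"
  unfolding bi_Perron_def
proof (intro conjI ballI)
  let ?l = "complex_of_real (perron_root n)"
  have gt1: "perron_root n > 1" using perron_root_gt_1[OF assms] .
  have roots: "poly (recip_quadratic n) z = 0 \<longleftrightarrow> z = ?l \<or> z = of_real (1 / perron_root n)"
    for z
    using recip_quadratic_roots[of n z] assms by simp
  show "?l \<in> \<real>" "Re ?l > 1" using gt1 by simp_all
  have "map_poly of_int (recip_quadratic n :: int poly) = recip_quadratic n"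
    by (simp add: recip_quadratic_def)
  then show "algebraic_integer ?l"
    unfolding algebraic_integer_def using roots
    by (intro exI[of _ "recip_quadratic n"]) (simp add: recip_quadratic_def)
  fix z assume z: "z \<in> galois_conjugates ?l"
  have rat: "map_poly of_rat (recip_quadratic n :: rat poly) = (recip_quadratic n :: complex poly)"
    by (simp add: recip_quadratic_def of_rat_minus)
  have "z = ?l \<or> z = of_real (1 / perron_root n)"
    using galois_conjugate_root[of "recip_quadratic n" ?l z] z unfolding rat roots by simp
  then have "cmod z = perron_root n \<or> cmod z = 1 / perron_root n"
    using gt1 by (auto simp: norm_divide)
  moreover have "1 / perron_root n < perron_root n"
    using gt1 by (simp add: divide_less_eq less_1_mult)
  ultimately show "1 / Re ?l \<le> cmod z" "cmod z \<le> Re ?l"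
    by auto
qed

definition companion_mat :: "nat \<Rightarrow> int mat" where
  "companion_mat n = mat 2 2 (\<lambda>(i,j).
     if i = 0 then (if j = 0 then int n else -1) else (if j = 0 then 1 else 0))"

definition neg_swap_mat :: "int mat" where
  "neg_swap_mat = mat 2 2 (\<lambda>(i,j). if i = j then 0 else -1)"

definition core_mat :: "nat \<Rightarrow> int mat" where
  "core_mat n = four_block_mat (companion_mat n) neg_swap_mat (0\<^sub>m 2 2) (companion_mat n)"

definition correction_mat :: "nat \<Rightarrow> nat \<Rightarrow> int mat" where
  "correction_mat n m = mat 4 m (\<lambda>(i,j).
     if j = 0 then (if i = 0 \<or> i = 2 then 1 - int n else if i = 3 then -1 else 0) else 0)"

definition symp_J_upper_right :: "nat \<Rightarrow> int mat" where
  "symp_J_upper_right m = mat 4 m (\<lambda>(i,j). if i = 3 \<and> j = 0 then 1 else 0)"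

definition symp_J_lower_left :: "nat \<Rightarrow> int mat" where
  "symp_J_lower_left m = mat m 4 (\<lambda>(i,j). if i = 0 \<and> j = 3 then -1 else 0)"

definition sp_example :: "nat \<Rightarrow> nat \<Rightarrow> int mat" where
  "sp_example n g = four_block_mat (core_mat n) (correction_mat n (2*(g-2)))
     (0\<^sub>m (2*(g-2)) 4) (1\<^sub>m (2*(g-2)))"

lemma sum_lessThan_4: "(\<Sum>k<4::nat. f k) = f 0 + f 1 + f 2 + (f 3 :: 'a::comm_monoid_add)"
  by (simp add: numeral_eq_Suc add.assoc)

lemma less_4_cases: "(i::nat) < 4 \<Longrightarrow> i = 0 \<or> i = 1 \<or> i = 2 \<or> i = 3"
  by auto

lemma core_mat_entries: "core_mat n = mat 4 4 (\<lambda>(i,j).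
     if i = 0 then (if j = 0 then int n else if j = 2 then 0 else -1)
     else if i = 1 then (if j = 0 then 1 else if j = 2 then -1 else 0)
     else if i = 2 then (if j = 2 then int n else if j = 3 then -1 else 0)
     else (if j = 2 then 1 else 0))"
  by (rule eq_matI) (auto simp: core_mat_def companion_mat_def neg_swap_mat_def)

lemma core_mat_carrier: "core_mat n \<in> carrier_mat 4 4"
  unfolding core_mat_entries by simp

lemma correction_mat_carrier: "correction_mat n m \<in> carrier_mat 4 m"
  by (simp add: correction_mat_def)

lemma symp_J_carrier: "symp_J g \<in> carrier_mat (2*g) (2*g)"
  by (simp add: symp_J_def)

lemma symp_J_upper_right_carrier: "symp_J_upper_right m \<in> carrier_mat 4 m"
  by (simp add: symp_J_upper_right_def)

lemma symp_J_lower_left_carrier: "symp_J_lower_left m \<in> carrier_mat m 4"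
  by (simp add: symp_J_lower_left_def)

lemma symp_J_split:
  assumes "g \<ge> 2"
  shows "symp_J g = four_block_mat (symp_J 2) (symp_J_upper_right (2*(g-2)))
           (symp_J_lower_left (2*(g-2))) (symp_J (g-2))"
  using assms by (intro eq_matI) (auto simp: symp_J_def symp_J_upper_right_def symp_J_lower_left_def)

lemma core_mat_symplectic: "transpose_mat (core_mat n) * symp_J 2 * core_mat n = symp_J 2"
  unfolding core_mat_entries
  by (rule eq_matI)
    (auto simp: symp_J_def scalar_prod_def sum_lessThan_4 atLeast0LessThan dest!: less_4_cases)

lemma core_mat_correction_upper_right:
  "transpose_mat (core_mat n) * (symp_J 2 * correction_mat n m + symp_J_upper_right m)
     = symp_J_upper_right m"
  unfolding core_mat_entries
  by (rule eq_matI) (auto simp: symp_J_def correction_mat_def symp_J_upper_right_def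
      scalar_prod_def sum_lessThan_4 atLeast0LessThan dest!: less_4_cases)

lemma core_mat_correction_lower_left:
  "(transpose_mat (correction_mat n m) * symp_J 2 + symp_J_lower_left m) * core_mat n
     = symp_J_lower_left m"
  unfolding core_mat_entries
  by (rule eq_matI) (auto simp: symp_J_def correction_mat_def symp_J_lower_left_def
      scalar_prod_def sum_lessThan_4 atLeast0LessThan dest!: less_4_cases)

lemma correction_mat_lower_right:
  "(transpose_mat (correction_mat n m) * symp_J 2 + symp_J_lower_left m) * correction_mat n m
     + transpose_mat (correction_mat n m) * symp_J_upper_right m = 0\<^sub>m m m"
  by (rule eq_matI) (auto simp: symp_J_def correction_mat_def symp_J_lower_left_def
      symp_J_upper_right_def scalar_prod_def sum_lessThan_4 atLeast0LessThan)

lemma sp_example_carrier: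
  assumes "g \<ge> 2"
  shows "sp_example n g \<in> carrier_mat (2*g) (2*g)"
proof -
  have "2*g = 4 + 2*(g-2)" using assms by simp
  then show ?thesis
    unfolding sp_example_def by (simp add: core_mat_carrier correction_mat_carrier)
qed

lemma det_companion_mat: "det (companion_mat n) = 1"
  by (subst det_mat_2) (auto simp: companion_mat_def)

lemma det_sp_example: "det (sp_example n g) = 1"
proof -
  have "det (core_mat n) = det (companion_mat n) * det (companion_mat n)"
    unfolding core_mat_def
    by (rule det_four_block_mat_lower_left_zero[OF _ _ refl])
      (simp_all add: companion_mat_def neg_swap_mat_def)
  then show ?thesis
    unfolding sp_example_def
    by (subst det_four_block_mat_lower_left_zero[OF core_mat_carrier correction_mat_carrier refl])
      (simp_all add: det_companion_mat)
qed

lemma sp_example_symplectic: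
  assumes "g \<ge> 2"
  shows "transpose_mat (sp_example n g) * symp_J g * sp_example n g = symp_J g"
proof -
  define m where "m = 2*(g-2)"
  have "symp_J (g-2) \<in> carrier_mat m m"
    unfolding m_def by (rule symp_J_carrier)
  moreover have "symp_J 2 \<in> carrier_mat 4 4"
    using symp_J_carrier[of 2] by simp
  ultimately show ?thesis
    unfolding sp_example_def symp_J_split[OF assms] m_def[symmetric]
    by (simp add: four_block_upper_unipotent_congruence[of _ 4 _ m] core_mat_carrier
        correction_mat_carrier core_mat_symplectic core_mat_correction_upper_right
        core_mat_correction_lower_left correction_mat_lower_right
        symp_J_upper_right_carrier symp_J_lower_left_carrier)
qed

lemma sp_example_in_Sp: "g \<ge> 2 \<Longrightarrow> sp_example n g \<in> Sp g"
  unfolding Sp_def using sp_example_carrier det_sp_example sp_example_symplectic by auto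

lemma char_poly_companion_mat:
  "char_poly (map_mat of_int (companion_mat n) :: 'a::comm_ring_1 mat) = recip_quadratic n"
proof -
  have "char_poly_matrix (map_mat of_int (companion_mat n) :: 'a mat) \<in> carrier_mat 2 2"
    by (simp add: companion_mat_def)
  then show ?thesis
    unfolding char_poly_def
    by (subst det_mat_2) (simp_all add: char_poly_matrix_def companion_mat_def recip_quadratic_def)
qed

lemma cpoly_sp_example: "cpoly (sp_example n g) = (recip_quadratic n * [:-1, 1:] ^ (g-2)) ^ 2"
proof -
  let ?h = "of_int :: int \<Rightarrow> complex"
  let ?M = "map_mat ?h (companion_mat n)"
  have M: "?M \<in> carrier_mat 2 2" by (simp add: companion_mat_def)
  have "map_mat ?h (core_mat n) = four_block_mat ?M (map_mat ?h neg_swap_mat) (0\<^sub>m 2 2) ?M"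
    unfolding core_mat_def by (rule eq_matI) (auto simp: companion_mat_def neg_swap_mat_def)
  then have core: "char_poly (map_mat ?h (core_mat n)) = recip_quadratic n ^ 2"
    using M by (simp add: char_poly_four_block_mat_lower_left_zero char_poly_companion_mat
        power2_eq_square neg_swap_mat_def)
  have "map_mat ?h (sp_example n g) = four_block_mat (map_mat ?h (core_mat n))
      (map_mat ?h (correction_mat n (2*(g-2)))) (0\<^sub>m (2*(g-2)) 4) (1\<^sub>m (2*(g-2)))"
    unfolding sp_example_def using core_mat_carrier[of n] correction_mat_carrier[of n "2*(g-2)"]
    by (intro eq_matI) auto
  then have "cpoly (sp_example n g) = recip_quadratic n ^ 2 * [:-1, 1:] ^ (2*(g-2))"
    unfolding cpoly_def using core_mat_carrier[of n] correction_mat_carrier[of n]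
    by (simp add: char_poly_four_block_mat_lower_left_zero char_poly_one_mat core)
  then show ?thesis
    by (simp add: power_even_eq power_mult_distrib)
qed

lemma eigenvalues_sp_example:
  assumes "n \<ge> 2"
  shows "eigenvalues (sp_example n g) =
           {of_real (perron_root n), of_real (1 / perron_root n)} \<union> (if g \<le> 2 then {} else {1})"
proof -
  have "poly (cpoly (sp_example n g)) z = 0 \<longleftrightarrow>
      poly (recip_quadratic n) z = 0 \<or> (z = 1 \<and> g > 2)" for z
    unfolding cpoly_sp_example by auto
  then show ?thesis
    unfolding eigenvalues_def recip_quadratic_roots[OF assms] by auto
qed

lemma leading_eigenvalue_sp_example:
  assumes "n \<ge> 3"
  shows "leading_eigenvalue (sp_example n g) (of_real (perron_root n))"
proof -
  have gt1: "perron_root n > 1"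
    using perron_root_gt_1[OF assms] .
  then have "1 / perron_root n < perron_root n"
    by (simp add: divide_less_eq less_1_mult)
  then have "cmod w \<le> perron_root n" if "w \<in> eigenvalues (sp_example n g)" for w
    using that gt1 assms by (auto simp: eigenvalues_sp_example norm_divide split: if_splits)
  moreover have "of_real (perron_root n) \<in> eigenvalues (sp_example n g)"
    using assms by (simp add: eigenvalues_sp_example)
  ultimately show ?thesis
    unfolding leading_eigenvalue_def using gt1 by simp
qed

lemma not_simple_eigenvalue_sp_example: "\<not> simple_eigenvalue (sp_example n g) z"
  by (rule not_simple_eigenvalue_if_cpoly_square[OF _ cpoly_sp_example])
    (simp add: recip_quadratic_nonzero)

theorem theorem1p4:
  fixes g :: nat
  assumes "g \<ge> 2"
  shows "(\<exists>A \<in> Sp g. (\<exists>l. leading_eigenvalue A l \<and> bi_Perron l) \<and>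
                     (\<forall>m. \<not> simple_eigenvalue A m))
       \<and> infinite {A \<in> Sp g. (\<exists>l. leading_eigenvalue A l \<and> bi_Perron l) \<and>
                     (\<forall>m. \<not> simple_eigenvalue A m)}"
proof -
  let ?S = "{A \<in> Sp g. (\<exists>l. leading_eigenvalue A l \<and> bi_Perron l) \<and>
                     (\<forall>m. \<not> simple_eigenvalue A m)}"
  have family: "sp_example n g \<in> ?S" if "n \<ge> 3" for n
    using sp_example_in_Sp[OF assms] leading_eigenvalue_sp_example[OF that]
      bi_Perron_perron_root[OF that] not_simple_eigenvalue_sp_example by blast
  have "sp_example n g $$ (0,0) = int n" for n
    by (simp add: sp_example_def core_mat_def companion_mat_def neg_swap_mat_def)
  then have "inj_on (\<lambda>n. sp_example n g) {3..}"
    by (metis inj_onI of_nat_eq_iff)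
  then have "infinite ((\<lambda>n. sp_example n g) ` {3..})"
    using finite_imageD infinite_Ici by blast
  moreover have "(\<lambda>n. sp_example n g) ` {3..} \<subseteq> ?S"
    using family by auto
  ultimately have "infinite ?S"
    using finite_subset by blast
  moreover have "sp_example 3 g \<in> ?S"
    by (rule family) simp
  ultimately show ?thesis
    by blast
qed

end
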